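(* Let $U\subseteq X$ be open and $A\subseteq U$ closed. Then for every $x\in X$, $$\varepsilon_x^{A\cup (X\setminus U)}(U)\ \ge\ \|\varepsilon_x^A\|-\sup_{z\in X\setminus U}\|\varepsilon_z^A\|.$$
   Context: $(X,\rho)$ is a separable metric space; $\mathcal M(X)$ the finite Borel measures (extended to universally measurable sets), $\|\mu\|:=\mu(X)$, $\varepsilon_x$ the Dirac measure. For every open $U\subseteq X$ and $x\in X$ a measure $\mu_x^U\in\mathcal M(X)$ is given such that for all open $U,V$ and all $x$: $\mu_x^U(U)=0$, $\|\mu_x^U\|\le1$, $\mu_x^U=\varepsilon_x$ if $x\notin U$; $y\mapsto\mu_y^U(E)$ is universally measurable for every Borel $E$; and $\mu_x^U=\int\mu_y^U\,d\mu_x^V(y)$ whenever $V\subseteq U$. For closed $A\subseteq X$, $\varepsilon_x^A:=\mu_x^{X\setminus A}$. *)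

theory Defs
  imports "HOL-Probability.Giry_Monad"
begin

text \<open>Finite Borel measure on the ambient space X (= UNIV of the type).\<close>
definition finite_borel_measure :: "'a::topological_space measure \<Rightarrow> bool" where
  "finite_borel_measure M \<longleftrightarrow> sets M = sets borel \<and> emeasure M UNIV < \<infinity>"

definition univ_measurable :: "('a::topological_space \<Rightarrow> ennreal) \<Rightarrow> bool" where
  "univ_measurable f \<longleftrightarrow>
     (\<forall>M. finite_borel_measure M \<longrightarrow> f \<in> borel_measurable (completion M))"

text \<open>The standing assumptions on the family \<open>\<mu> U x = \<mu>_x^U\<close> (only used for open U).\<close>
definition kernel_family :: "('a::topological_space set \<Rightarrow> 'a \<Rightarrow> 'a measure) \<Rightarrow> bool" where
  "kernel_family \<mu> \<longleftrightarrow>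
     (\<forall>U x. open U \<longrightarrow>
        finite_borel_measure (\<mu> U x) \<and>
        emeasure (\<mu> U x) U = 0 \<and>
        emeasure (\<mu> U x) UNIV \<le> 1 \<and>
        (x \<notin> U \<longrightarrow> \<mu> U x = return borel x)) \<and>
     (\<forall>U E. open U \<longrightarrow> E \<in> sets borel \<longrightarrow> univ_measurable (\<lambda>y. emeasure (\<mu> U y) E)) \<and>
     (\<forall>U V x. open U \<longrightarrow> open V \<longrightarrow> V \<subseteq> U \<longrightarrow>
        (\<forall>E \<in> sets borel.
           emeasure (\<mu> U x) E = (\<integral>\<^sup>+ y. emeasure (\<mu> U y) E \<partial>completion (\<mu> V x))))"

definition sweep :: "('a set \<Rightarrow> 'a \<Rightarrow> 'a measure) \<Rightarrow> 'a set \<Rightarrow> 'a \<Rightarrow> 'a measure" where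
  "sweep \<mu> A x = \<mu> (- A) x"

end

theory Submission
  imports Defs
begin

text \<open>Sweeping onto \<open>A\<close> can be done in two stages, first onto the larger closed set
\<open>B = A \<union> (X - U)\<close> and then onto \<open>A\<close>, so \<open>\<parallel>\<epsilon>_x^A\<parallel>\<close> is the integral of \<open>y \<mapsto> \<parallel>\<epsilon>_y^A\<parallel>\<close>
against \<open>\<epsilon>_x^B\<close>. That measure lives on \<open>B\<close>; there the integrand is \<open>1\<close> on \<open>A \<subseteq> U\<close>
(where \<open>\<epsilon>_y^A\<close> is the Dirac measure) and at most \<open>S = sup {\<parallel>\<epsilon>_z^A\<parallel> | z \<notin> U}\<close> off \<open>U\<close>.
As \<open>\<parallel>\<epsilon>_x^B\<parallel> \<le> 1\<close>, the integral is at most \<open>\<epsilon>_x^B(U) + S\<close>.\<close>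

lemma kernel_familyD:
  assumes "kernel_family \<mu>" and "open U"
  shows "finite_borel_measure (\<mu> U x)"
    and "emeasure (\<mu> U x) U = 0"
    and "emeasure (\<mu> U x) UNIV \<le> 1"
    and "x \<notin> U \<Longrightarrow> \<mu> U x = return borel x"
  using assms(1)[unfolded kernel_family_def, THEN conjunct1, rule_format, OF assms(2)] by simp_all

lemma kernel_family_composition:
  assumes "kernel_family \<mu>" and "open U" and "open V" and "V \<subseteq> U" and "E \<in> sets borel"
  shows "emeasure (\<mu> U x) E = (\<integral>\<^sup>+ y. emeasure (\<mu> U y) E \<partial>completion (\<mu> V x))"
  using assms(1)[unfolded kernel_family_def, THEN conjunct2, THEN conjunct2, rule_format, OF assms(2-5)] .

lemma
  assumes "kernel_family \<mu>" and "closed A"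
  shows sets_sweep: "sets (sweep \<mu> A x) = sets borel"
    and emeasure_sweep_Compl: "emeasure (sweep \<mu> A x) (- A) = 0"
    and emeasure_sweep_UNIV_le_1: "emeasure (sweep \<mu> A x) UNIV \<le> 1"
    and sweep_at_point: "x \<in> A \<Longrightarrow> sweep \<mu> A x = return borel x"
  using kernel_familyD[OF assms(1), of "- A" x] assms(2)
  by (auto simp: sweep_def finite_borel_measure_def)

lemma AE_sweep_in:
  assumes "kernel_family \<mu>" and "closed A"
  shows "AE y in sweep \<mu> A x. y \<in> A"
proof -
  have "- A \<in> sets (sweep \<mu> A x)"
    unfolding sets_sweep[OF assms] using assms(2) by (intro borel_open) (simp only: open_Compl)
  then have "- A \<in> null_sets (sweep \<mu> A x)"
    by (rule null_setsI[OF emeasure_sweep_Compl[OF assms]])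
  then show ?thesis
    by (rule AE_not_in[THEN eventually_mono]) simp
qed

lemma emeasure_sweep_iterated:
  assumes "kernel_family \<mu>" and "closed A" and "closed B" and "A \<subseteq> B" and "E \<in> sets borel"
  shows "emeasure (sweep \<mu> A x) E = (\<integral>\<^sup>+ y. emeasure (sweep \<mu> A y) E \<partial>completion (sweep \<mu> B x))"
  unfolding sweep_def using assms by (intro kernel_family_composition) auto

lemma nn_integral_completion_le_emeasure_plus_const:
  fixes \<nu> :: "'a::topological_space measure"
  assumes "sets \<nu> = sets borel" and "emeasure \<nu> UNIV \<le> 1" and "U \<in> sets borel"
    and "AE y in \<nu>. f y \<le> indicator U y + c"
  shows "(\<integral>\<^sup>+ y. f y \<partial>completion \<nu>) \<le> emeasure \<nu> U + c"
proof -
  have space: "space \<nu> = UNIV"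
    using sets_eq_imp_space_eq[OF assms(1)] by simp
  have "(\<integral>\<^sup>+ y. f y \<partial>completion \<nu>) \<le> (\<integral>\<^sup>+ y. indicator U y + c \<partial>completion \<nu>)"
    using assms(4) by (intro nn_integral_mono_AE AE_completion)
  also have "\<dots> = (\<integral>\<^sup>+ y. indicator U y \<partial>\<nu>) + (\<integral>\<^sup>+ y. c \<partial>\<nu>)"
    unfolding nn_integral_completion using assms(1,3) by (intro nn_integral_add) auto
  also have "\<dots> = emeasure \<nu> U + c * emeasure \<nu> UNIV"
    using assms(1,3) space by simp
  also have "\<dots> \<le> emeasure \<nu> U + c"
    using assms(2) by (intro add_left_mono) (metis mult.comm_neutral mult_left_mono zero_le)
  finally show ?thesis .
qed

lemma emeasure_sweep_UNIV_le_indicator_plus_SUP: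
  assumes "kernel_family \<mu>" and "closed A" and "A \<subseteq> U" and "y \<in> A \<union> - U"
  shows "emeasure (sweep \<mu> A y) UNIV
           \<le> indicator U y + (SUP z \<in> - U. emeasure (sweep \<mu> A z) UNIV)"
proof (cases "y \<in> A")
  case True
  with assms show ?thesis by (auto simp: sweep_at_point)
next
  case False
  with assms(4) have "emeasure (sweep \<mu> A y) UNIV \<le> (SUP z \<in> - U. emeasure (sweep \<mu> A z) UNIV)"
    by (intro SUP_upper) auto
  then show ?thesis by (simp add: add_increasing)
qed

theorem lemma4p8:
  fixes \<mu> :: "'a::metric_space set \<Rightarrow> 'a \<Rightarrow> 'a measure"
    and U A :: "'a set" and x :: 'a
  assumes "separable_space (euclidean :: 'a topology)"
    and "kernel_family \<mu>"
    and "open U" and "closed A" and "A \<subseteq> U"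
  shows "emeasure (sweep \<mu> (A \<union> - U) x) U
           \<ge> emeasure (sweep \<mu> A x) UNIV - (SUP z \<in> - U. emeasure (sweep \<mu> A z) UNIV)"
proof -
  let ?B = "A \<union> - U" and ?S = "SUP z \<in> - U. emeasure (sweep \<mu> A z) UNIV"
  have B: "closed ?B" using assms(3,4) by auto
  have bound: "AE y in sweep \<mu> ?B x. emeasure (sweep \<mu> A y) UNIV \<le> indicator U y + ?S"
    using AE_sweep_in[OF assms(2) B]
    by (rule eventually_mono) (rule emeasure_sweep_UNIV_le_indicator_plus_SUP[OF assms(2,4,5)])
  have "emeasure (sweep \<mu> A x) UNIV
      = (\<integral>\<^sup>+ y. emeasure (sweep \<mu> A y) UNIV \<partial>completion (sweep \<mu> ?B x))"
    by (rule emeasure_sweep_iterated) (use assms(2,4) B in auto)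
  also have "\<dots> \<le> emeasure (sweep \<mu> ?B x) U + ?S"
    using assms(3) bound
    by (intro nn_integral_completion_le_emeasure_plus_const sets_sweep[OF assms(2) B]
        emeasure_sweep_UNIV_le_1[OF assms(2) B]) auto
  finally have "emeasure (sweep \<mu> A x) UNIV \<le> ?S + emeasure (sweep \<mu> ?B x) U"
    by (simp only: add.commute)
  moreover have "emeasure (sweep \<mu> A x) UNIV < top"
    using emeasure_sweep_UNIV_le_1[OF assms(2,4)] ennreal_one_less_top by (rule order.strict_trans1)
  ultimately show ?thesis
    unfolding ennreal_minus_le_iff by auto
qed

end
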